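(* The following are equivalent: (a) $\mathbf{0}\in\mathrm{conv}\,\chi$; (b) for every $\mathbf{x}_i\in\chi$ and every $\mathbf{x}\in\mathcal{D}_{i,\mathrm{DP}}$ one has $\|\mathbf{x}\|\ge\|\mathbf{x}_i\|$. Moreover, when $\mathbf{0}\in\mathrm{conv}\,\chi$, equality $\|\mathbf{x}\|=\|\mathbf{x}_i\|$ with $\mathbf{x}\in\mathcal{D}_{i,\mathrm{DP}}$ holds only for $\mathbf{x}=\mathbf{x}_i$.
   Context: A constellation is a finite set $\chi=\{\mathbf{x}_1,\dots,\mathbf{x}_M\}\subset\mathbb{R}^2$ of distinct points, $M\ge 3$, not all lying on one line. The Voronoi region of $\mathbf{x}_i$ is $\mathcal{D}_{i,\mathrm{ML}}=\{\mathbf{x}\in\mathbb{R}^2:\|\mathbf{x}-\mathbf{x}_i\|\le\|\mathbf{x}-\mathbf{x}_j\|\ \forall j\}$. Two distinct points $\mathbf{x}_i,\mathbf{x}_j$ are neighbors if their Voronoi regions share an edge (a common boundary segment or ray of positive length); $\mathcal{S}_i$ denotes the set of neighbors of $\mathbf{x}_i$. The distance preserving constructive interference region (DPCIR) of $\mathbf{x}_i$ is $\mathcal{D}_{i,\mathrm{DP}}=\{\mathbf{x}\in\mathbb{R}^2:(\mathbf{x}_i-\mathbf{x}_j)^T\mathbf{x}\ge (\mathbf{x}_i-\mathbf{x}_j)^T(\mathbf{x}_i+\mathbf{x}_j)/2+\|\mathbf{x}_i-\mathbf{x}_j\|^2/2\ \forall\mathbf{x}_j\in\mathcal{S}_i\}$,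 equivalently $\{\mathbf{x}:(\mathbf{x}_i-\mathbf{x}_j)^T(\mathbf{x}-\mathbf{x}_i)\ge 0\ \forall\mathbf{x}_j\in\mathcal{S}_i\}$. $\mathrm{conv}\,\chi$ is the convex hull of $\chi$. *)

theory Defs
  imports "HOL-Analysis.Analysis"
begin

definition constellation :: "(real^2) set \<Rightarrow> bool" where
  "constellation X \<longleftrightarrow> finite X \<and> card X \<ge> 3 \<and> \<not> collinear X"

definition voronoi :: "(real^2) set \<Rightarrow> real^2 \<Rightarrow> (real^2) set" where
  "voronoi X xi = {x. \<forall>xj\<in>X. norm (x - xi) \<le> norm (x - xj)}"

text \<open>Two distinct points are neighbours if their Voronoi regions share a boundary
  piece of positive length, i.e. the (convex) common part contains a nondegenerate
  segment, equivalently two distinct points.\<close>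
definition neighbors :: "(real^2) set \<Rightarrow> real^2 \<Rightarrow> real^2 \<Rightarrow> bool" where
  "neighbors X xi xj \<longleftrightarrow> xi \<noteq> xj \<and>
     (\<exists>a b. a \<noteq> b \<and> closed_segment a b \<subseteq> voronoi X xi \<inter> voronoi X xj)"

definition neighbor_set :: "(real^2) set \<Rightarrow> real^2 \<Rightarrow> (real^2) set" where
  "neighbor_set X xi = {xj \<in> X. neighbors X xi xj}"

definition dpcir :: "(real^2) set \<Rightarrow> real^2 \<Rightarrow> (real^2) set" where
  "dpcir X xi = {x. \<forall>xj\<in>neighbor_set X xi.
      (xi - xj) \<bullet> x \<ge> (xi - xj) \<bullet> (xi + xj) / 2 + (norm (xi - xj))\<^sup>2 / 2}"

end

theory Submission
  imports Defs
begin

text \<open>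
  The DPCIR of x_i is the cone at x_i of the directions d with (x_i - x_j) . d \<ge> 0 for
  the neighbours x_j. The crux is that then (x_i - x_k) . d \<ge> 0 for every point x_k of the
  constellation: the Voronoi cell is cut out by the bisectors of the neighbours alone, so
  the ray from x_i in direction d never leaves the cell and never crosses the bisector of
  x_i and x_k. Hence d supports the constellation at x_i, and if 0 lies in its convex hull
  then d . x_i \<ge> 0, so that |x_i + d|^2 = |x_i|^2 + 2 d . x_i + |d|^2 \<ge> |x_i|^2 + |d|^2.
  Conversely, if 0 is not in the convex hull, take a separating direction a and the point
  x_i minimising a . x_i; then x_i - t a lies in the DPCIR of x_i and, for the right t > 0,
  is closer to 0 than x_i.

  That the neighbours suffice is seen by following the segment from x_i to a point z
  outside the cell: at the exit point p some bisectors are tight, and tilting the inward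
  direction x_i - p in the plane until it becomes tangent to one of them yields a boundary
  segment shared with the corresponding point, which is thus a neighbour whose constraint
  fails at z.
\<close>

definition bisector_slack :: "'a::real_inner \<Rightarrow> 'a \<Rightarrow> 'a \<Rightarrow> real" where
  "bisector_slack xi k y = (norm (y - k))\<^sup>2 - (norm (y - xi))\<^sup>2"

lemma bisector_slack_eq:
  "bisector_slack xi k y = 2 * ((xi - k) \<bullet> (y - xi)) + (norm (xi - k))\<^sup>2"
proof -
  have "y - k = (y - xi) + (xi - k)" by simp
  then have "(norm (y - k))\<^sup>2 = (norm (y - xi))\<^sup>2 + 2 * ((xi - k) \<bullet> (y - xi)) + (norm (xi - k))\<^sup>2"
    by (metis power2_norm_eq_inner inner_add_left inner_add_right inner_commute mult_2 add.assoc)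
  then show ?thesis by (simp add: bisector_slack_def)
qed

lemma bisector_slack_add_scaleR:
  "bisector_slack xi k (y + t *\<^sub>R w) = bisector_slack xi k y + 2 * t * ((xi - k) \<bullet> w)"
  unfolding bisector_slack_eq by (simp add: inner_diff_right inner_add_right algebra_simps)

lemma bisector_slack_center: "bisector_slack xi k xi = (norm (xi - k))\<^sup>2"
  by (simp add: bisector_slack_def)

lemma bisector_slack_self [simp]: "bisector_slack xi xi y = 0"
  by (simp add: bisector_slack_def)

lemma mem_voronoi_iff_slack:
  "y \<in> voronoi X xi \<longleftrightarrow> (\<forall>k\<in>X. 0 \<le> bisector_slack xi k y)"
  by (simp add: voronoi_def bisector_slack_def abs_le_square_iff[of "norm _" "norm _", simplified])

lemma mem_voronoi_if_slack_eq_0: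
  assumes "y \<in> voronoi X xi" "bisector_slack xi j y = 0"
  shows "y \<in> voronoi X j"
proof -
  have "norm (y - xi) = norm (y - j)"
    using assms(2) by (simp add: bisector_slack_def power2_eq_iff_nonneg)
  then show ?thesis using assms(1) by (simp add: voronoi_def)
qed

lemma mem_dpcir_iff:
  "x \<in> dpcir X xi \<longleftrightarrow> (\<forall>j\<in>neighbor_set X xi. 0 \<le> (xi - j) \<bullet> (x - xi))"
proof -
  have "(xi - j) \<bullet> (xi + j) / 2 + (norm (xi - j))\<^sup>2 / 2 = (xi - j) \<bullet> xi" for j
    unfolding power2_norm_eq_inner by (simp add: inner_add inner_diff inner_commute field_simps)
  then show ?thesis unfolding dpcir_def by (auto simp: inner_diff_right)
qed

lemma ratio_test:
  fixes \<alpha> \<beta> :: "'i \<Rightarrow> real"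
  assumes "finite I" "\<forall>k\<in>I. 0 < \<alpha> k" "k0 \<in> I" "\<beta> k0 < 0"
  obtains s j where "0 < s" "j \<in> I" "\<alpha> j + s * \<beta> j = 0" "\<forall>k\<in>I. 0 \<le> \<alpha> k + s * \<beta> k"
proof -
  define J where "J = {k\<in>I. \<beta> k < 0}"
  define R where "R = (\<lambda>k. \<alpha> k / - \<beta> k) ` J"
  have "finite R" unfolding R_def J_def using assms(1) by simp
  moreover have "R \<noteq> {}" unfolding R_def J_def using assms(3,4) by blast
  ultimately have "Min R \<in> R" by (rule Min_in)
  then obtain j where j: "j \<in> I" "\<beta> j < 0" "Min R = \<alpha> j / - \<beta> j"
    unfolding R_def J_def by blast
  have Min_le_ratio: "Min R \<le> \<alpha> k / - \<beta> k" if "k \<in> I" "\<beta> k < 0" for k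
    using \<open>finite R\<close> that unfolding R_def J_def by (intro Min_le) auto
  have "0 < Min R" using j assms(2) by (simp add: divide_pos_neg)
  moreover have "\<alpha> j + Min R * \<beta> j = 0" using j by (simp add: field_simps)
  moreover have "0 \<le> \<alpha> k + Min R * \<beta> k" if "k \<in> I" for k
  proof (cases "\<beta> k < 0")
    case True
    then have "Min R * - \<beta> k \<le> \<alpha> k"
      using mult_right_mono[OF Min_le_ratio[OF that True], of "- \<beta> k"] True by simp
    then show ?thesis by simp
  next
    case False
    then show ?thesis
      using \<open>0 < Min R\<close> that assms(2) by (simp add: add_pos_nonneg less_imp_le)
  qed
  ultimately show thesis using that j(1) by blast
qed

text \<open>Moving from u along v or -v, the first constraint to become tight is found by
  the ratio test; the resulting w = u + s v' is nonzero because u . w = u . u.\<close>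

lemma exists_supporting_direction:
  fixes a :: "'i \<Rightarrow> 'a::real_inner"
  assumes "finite T" "j0 \<in> T" "\<forall>k\<in>T. 0 < a k \<bullet> u" "v \<noteq> 0" "u \<bullet> v = 0"
  obtains w j where "w \<noteq> 0" "j \<in> T" "a j \<bullet> w = 0" "\<forall>k\<in>T. 0 \<le> a k \<bullet> w"
proof (cases "\<forall>k\<in>T. a k \<bullet> v = 0")
  case True
  then have "\<forall>k\<in>T. 0 \<le> a k \<bullet> v" by simp
  with True show thesis using that[of v j0] assms(2,4) by blast
next
  case False
  obtain k1 v' where k1: "k1 \<in> T" "a k1 \<bullet> v' < 0" and "u \<bullet> v' = 0"
  proof -
    obtain k1 where "k1 \<in> T" "a k1 \<bullet> v \<noteq> 0" using False by blast
    then consider "a k1 \<bullet> v < 0" | "a k1 \<bullet> (- v) < 0" by fastforce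
    then show thesis
      using that[of k1 v] that[of k1 "- v"] \<open>k1 \<in> T\<close> assms(5) by cases simp_all
  qed
  obtain s j where s: "j \<in> T" "a j \<bullet> u + s * (a j \<bullet> v') = 0"
      "\<forall>k\<in>T. 0 \<le> a k \<bullet> u + s * (a k \<bullet> v')"
    by (rule ratio_test[of T "\<lambda>k. a k \<bullet> u" k1 "\<lambda>k. a k \<bullet> v'"]) (use assms(1,3) k1 in auto)
  define w where "w = u + s *\<^sub>R v'"
  have "u \<noteq> 0" using assms(3) \<open>j \<in> T\<close> by auto
  moreover have "u \<bullet> w = u \<bullet> u" using \<open>u \<bullet> v' = 0\<close> by (simp add: w_def inner_add_right)
  ultimately have "w \<noteq> 0" by auto
  then show thesis using that[of w j] s by (simp add: w_def inner_add_right)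
qed

lemma voronoi_contains_feasible_ray_segment:
  fixes X :: "(real^2) set"
  assumes "finite X" "p \<in> voronoi X xi"
    and "\<forall>k\<in>X. bisector_slack xi k p = 0 \<longrightarrow> 0 \<le> (xi - k) \<bullet> w"
  obtains e where "0 < e" "\<And>t. 0 \<le> t \<Longrightarrow> t \<le> e \<Longrightarrow> p + t *\<^sub>R w \<in> voronoi X xi"
proof -
  have slack_along: "bisector_slack xi k (p + t *\<^sub>R w) = bisector_slack xi k p + 2 * t * ((xi - k) \<bullet> w)"
    for k t by (rule bisector_slack_add_scaleR)
  have "\<forall>\<^sub>F t in at_right 0. \<forall>k\<in>X. 0 \<le> bisector_slack xi k (p + t *\<^sub>R w)"
  proof (rule eventually_ball_finite[OF assms(1)], intro ballI)
    fix k assume "k \<in> X"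
    show "\<forall>\<^sub>F t in at_right 0. 0 \<le> bisector_slack xi k (p + t *\<^sub>R w)"
    proof (cases "bisector_slack xi k p = 0")
      case True
      then have "0 \<le> (xi - k) \<bullet> w" using assms(3) \<open>k \<in> X\<close> by blast
      with True show ?thesis
        by (intro eventually_mono[OF eventually_at_right_less[of 0]]) (simp add: slack_along)
    next
      case False
      then have "0 < bisector_slack xi k p"
        using assms(2) \<open>k \<in> X\<close> by (simp add: mem_voronoi_iff_slack order_le_neq_trans)
      moreover have "((\<lambda>t. bisector_slack xi k (p + t *\<^sub>R w)) \<longlongrightarrow> bisector_slack xi k p) (at_right 0)"
        unfolding slack_along by (auto intro!: tendsto_eq_intros)
      ultimately show ?thesis
        by (auto dest: order_tendstoD(1) elim!: eventually_mono)
    qed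
  qed
  then obtain b where "0 < b" and b: "\<And>t. 0 < t \<Longrightarrow> t < b \<Longrightarrow> p + t *\<^sub>R w \<in> voronoi X xi"
    by (auto simp: eventually_at_right_field mem_voronoi_iff_slack)
  show thesis
  proof (rule that[of "b / 2"])
    show "p + t *\<^sub>R w \<in> voronoi X xi" if "0 \<le> t" "t \<le> b / 2" for t
      using b[of t] assms(2) \<open>0 < b\<close> that by (cases "t = 0") auto
  qed (use \<open>0 < b\<close> in simp)
qed

lemma neighbors_if_tangent_direction:
  fixes X :: "(real^2) set"
  assumes "finite X" "j \<noteq> xi" "p \<in> voronoi X xi" "bisector_slack xi j p = 0"
    and "w \<noteq> 0" "(xi - j) \<bullet> w = 0"
    and "\<forall>k\<in>X. bisector_slack xi k p = 0 \<longrightarrow> 0 \<le> (xi - k) \<bullet> w"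
  shows "neighbors X xi j"
proof -
  obtain e where "0 < e" and e: "\<And>t. 0 \<le> t \<Longrightarrow> t \<le> e \<Longrightarrow> p + t *\<^sub>R w \<in> voronoi X xi"
    using voronoi_contains_feasible_ray_segment[OF assms(1,3,7)] by blast
  have "closed_segment p (p + e *\<^sub>R w) \<subseteq> voronoi X xi \<inter> voronoi X j"
  proof
    fix y assume "y \<in> closed_segment p (p + e *\<^sub>R w)"
    then obtain u where u: "0 \<le> u" "u \<le> 1" "y = (1 - u) *\<^sub>R p + u *\<^sub>R (p + e *\<^sub>R w)"
      by (auto simp: in_segment)
    define t where "t = u * e"
    have t: "0 \<le> t" "t \<le> e" "y = p + t *\<^sub>R w"
      using u \<open>0 < e\<close> by (auto simp: t_def algebra_simps mult_left_le_one_le)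
    then have "y \<in> voronoi X xi" using e by blast
    moreover have "bisector_slack xi j y = 0"
      using assms(4,6) t(3) by (simp add: bisector_slack_add_scaleR)
    ultimately show "y \<in> voronoi X xi \<inter> voronoi X j"
      by (blast intro: mem_voronoi_if_slack_eq_0)
  qed
  moreover have "p \<noteq> p + e *\<^sub>R w" using \<open>0 < e\<close> assms(5) by simp
  ultimately show ?thesis using assms(2) unfolding neighbors_def by blast
qed

lemma exists_tight_neighbor:
  fixes X :: "(real^2) set"
  assumes "finite X" "p \<in> voronoi X xi" "j0 \<in> X" "j0 \<noteq> xi" "bisector_slack xi j0 p = 0"
  obtains j where "j \<in> neighbor_set X xi" "bisector_slack xi j p = 0"
proof -
  define T where "T = {k\<in>X. k \<noteq> xi \<and> bisector_slack xi k p = 0}"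
  have inward: "0 < (xi - k) \<bullet> (xi - p)" if "k \<in> T" for k
  proof -
    have "2 * ((xi - k) \<bullet> (p - xi)) + (norm (xi - k))\<^sup>2 = 0" "0 < (norm (xi - k))\<^sup>2"
      using that by (auto simp: T_def bisector_slack_eq)
    moreover have "(xi - k) \<bullet> (p - xi) = - ((xi - k) \<bullet> (xi - p))"
      by (metis inner_minus_right minus_diff_eq)
    ultimately show ?thesis by linarith
  qed
  obtain v :: "real^2" where "v \<noteq> 0" "orthogonal (xi - p) v"
    using orthogonal_to_vector_exists[of "xi - p"] by auto
  then obtain w j where w: "w \<noteq> 0" "j \<in> T" "(xi - j) \<bullet> w = 0" "\<forall>k\<in>T. 0 \<le> (xi - k) \<bullet> w"
    using exists_supporting_direction[of T j0 "\<lambda>k. xi - k" "xi - p" v] inward assms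
    by (auto simp: T_def orthogonal_def)
  have "neighbors X xi j"
  proof (rule neighbors_if_tangent_direction[OF assms(1) _ assms(2) _ w(1,3)])
    show "\<forall>k\<in>X. bisector_slack xi k p = 0 \<longrightarrow> 0 \<le> (xi - k) \<bullet> w"
      using w(4) by (auto simp: T_def)
  qed (use w(2) in \<open>auto simp: T_def\<close>)
  then show thesis using that w(2) by (auto simp: T_def neighbor_set_def)
qed

lemma exists_voronoi_exit_point:
  fixes X :: "(real^2) set"
  assumes "finite X" "z \<notin> voronoi X xi"
  obtains s j where "0 < s" "s < 1" "xi + s *\<^sub>R (z - xi) \<in> voronoi X xi"
    "j \<in> X" "j \<noteq> xi" "bisector_slack xi j (xi + s *\<^sub>R (z - xi)) = 0"
proof -
  obtain k0 where k0: "k0 \<in> X" "bisector_slack xi k0 z < 0"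
    using assms(2) by (auto simp: mem_voronoi_iff_slack not_le)
  define \<alpha> where "\<alpha> k = (norm (xi - k))\<^sup>2" for k
  define \<beta> where "\<beta> k = 2 * ((xi - k) \<bullet> (z - xi))" for k
  have slack_along: "bisector_slack xi k (xi + t *\<^sub>R (z - xi)) = \<alpha> k + t * \<beta> k" for k t
    by (simp add: bisector_slack_add_scaleR bisector_slack_center \<alpha>_def \<beta>_def)
  have slack_z: "bisector_slack xi k z = \<alpha> k + \<beta> k" for k
    using slack_along[of k 1] by simp
  have \<alpha>_pos: "\<forall>k\<in>X - {xi}. 0 < \<alpha> k" by (auto simp: \<alpha>_def)
  have "k0 \<noteq> xi" using k0(2) by auto
  then have "0 < \<alpha> k0" using \<alpha>_pos k0(1) by blast
  then have "\<beta> k0 < 0" using k0(2) slack_z[of k0] by linarith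
  obtain s j where s: "0 < s" "j \<in> X - {xi}" "\<alpha> j + s * \<beta> j = 0"
      "\<forall>k\<in>X - {xi}. 0 \<le> \<alpha> k + s * \<beta> k"
    by (rule ratio_test[of "X - {xi}" \<alpha> k0 \<beta>])
      (use assms(1) \<alpha>_pos k0(1) \<open>k0 \<noteq> xi\<close> \<open>\<beta> k0 < 0\<close> in auto)
  have "0 \<le> \<alpha> k0 + s * \<beta> k0" using s(4) k0(1) \<open>k0 \<noteq> xi\<close> by blast
  then have "\<beta> k0 * 1 < \<beta> k0 * s" using k0(2) slack_z[of k0] by (simp add: mult.commute)
  with \<open>\<beta> k0 < 0\<close> have "s < 1" by (simp add: mult_less_cancel_left_neg)
  have "xi + s *\<^sub>R (z - xi) \<in> voronoi X xi"
    unfolding mem_voronoi_iff_slack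
  proof
    fix k assume "k \<in> X"
    then show "0 \<le> bisector_slack xi k (xi + s *\<^sub>R (z - xi))"
      using s(4) by (cases "k = xi") (auto simp: slack_along)
  qed
  with s \<open>s < 1\<close> show thesis by (intro that[of s j]) (auto simp: slack_along)
qed

lemma mem_voronoi_if_neighbor_slacks_nonneg:
  fixes X :: "(real^2) set"
  assumes "finite X" "\<forall>j\<in>neighbor_set X xi. 0 \<le> bisector_slack xi j z"
  shows "z \<in> voronoi X xi"
proof (rule ccontr)
  assume "z \<notin> voronoi X xi"
  then obtain s j where s: "0 < s" "s < 1" and p: "xi + s *\<^sub>R (z - xi) \<in> voronoi X xi"
    and j: "j \<in> X" "j \<noteq> xi" "bisector_slack xi j (xi + s *\<^sub>R (z - xi)) = 0"
    by (rule exists_voronoi_exit_point[OF assms(1)])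
  obtain j' where j': "j' \<in> neighbor_set X xi" "bisector_slack xi j' (xi + s *\<^sub>R (z - xi)) = 0"
    by (rule exists_tight_neighbor[OF assms(1) p j])
  define \<alpha> \<beta> where "\<alpha> = (norm (xi - j'))\<^sup>2" and "\<beta> = 2 * ((xi - j') \<bullet> (z - xi))"
  have slack_along: "bisector_slack xi j' (xi + t *\<^sub>R (z - xi)) = \<alpha> + t * \<beta>" for t
    by (simp add: bisector_slack_add_scaleR bisector_slack_center \<alpha>_def \<beta>_def)
  have "0 \<le> bisector_slack xi j' z" using assms(2) j'(1) by blast
  then have "0 \<le> \<alpha> + \<beta>" using slack_along[of 1] by simp
  have "j' \<noteq> xi" using j'(1) by (auto simp: neighbor_set_def neighbors_def)
  then have "0 < \<alpha>" by (simp add: \<alpha>_def)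
  moreover have "\<alpha> + s * \<beta> = 0" using j'(2) by (simp add: slack_along)
  ultimately have "\<beta> < 0" using s(1) by (smt (verit) mult_nonneg_nonneg)
  then have "(1 - s) * \<beta> < 0" using s(2) by (simp add: mult_pos_neg)
  then show False using \<open>0 \<le> \<alpha> + \<beta>\<close> \<open>\<alpha> + s * \<beta> = 0\<close> by (simp add: algebra_simps)
qed

lemma dpcir_inner_nonneg:
  fixes X :: "(real^2) set"
  assumes "finite X" "x \<in> dpcir X xi" "k \<in> X"
  shows "0 \<le> (xi - k) \<bullet> (x - xi)"
proof (rule ccontr)
  define d where "d = x - xi"
  assume "\<not> 0 \<le> (xi - k) \<bullet> (x - xi)"
  then have "(xi - k) \<bullet> d < 0" by (simp add: d_def)
  have slack_along: "bisector_slack xi j (xi + t *\<^sub>R d) = (norm (xi - j))\<^sup>2 + 2 * t * ((xi - j) \<bullet> d)"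
    for j t by (simp add: bisector_slack_add_scaleR bisector_slack_center)
  \<comment> \<open>far enough along the ray the slack for k drops to -1\<close>
  define t where "t = ((norm (xi - k))\<^sup>2 + 1) / (- 2 * ((xi - k) \<bullet> d))"
  have "0 \<le> t" using \<open>(xi - k) \<bullet> d < 0\<close> by (simp add: t_def divide_nonneg_neg)
  have "xi + t *\<^sub>R d \<in> voronoi X xi"
  proof (rule mem_voronoi_if_neighbor_slacks_nonneg[OF assms(1)], intro ballI)
    fix j assume "j \<in> neighbor_set X xi"
    then have "0 \<le> (xi - j) \<bullet> d" using assms(2) by (simp add: mem_dpcir_iff d_def)
    then show "0 \<le> bisector_slack xi j (xi + t *\<^sub>R d)"
      using \<open>0 \<le> t\<close> by (simp add: slack_along)
  qed
  then have "0 \<le> bisector_slack xi k (xi + t *\<^sub>R d)"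
    using assms(3) by (simp add: mem_voronoi_iff_slack)
  moreover have "2 * t * ((xi - k) \<bullet> d) = - ((norm (xi - k))\<^sup>2 + 1)"
    using \<open>(xi - k) \<bullet> d < 0\<close> by (simp add: t_def field_simps)
  ultimately show False by (simp add: slack_along)
qed

lemma norm_ge_on_dpcir:
  fixes X :: "(real^2) set"
  assumes "finite X" "0 \<in> convex hull X" "x \<in> dpcir X xi"
  shows "(norm xi)\<^sup>2 + (norm (x - xi))\<^sup>2 \<le> (norm x)\<^sup>2"
    and "norm xi \<le> norm x"
    and "norm x = norm xi \<Longrightarrow> x = xi"
proof -
  define d where "d = x - xi"
  have "X \<subseteq> {y. d \<bullet> y \<le> d \<bullet> xi}"
  proof
    fix y assume "y \<in> X"
    then have "0 \<le> (xi - y) \<bullet> d" using dpcir_inner_nonneg[OF assms(1,3)] by (simp add: d_def)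
    then show "y \<in> {y. d \<bullet> y \<le> d \<bullet> xi}" by (simp add: inner_diff_right inner_commute[of _ d])
  qed
  then have "convex hull X \<subseteq> {y. d \<bullet> y \<le> d \<bullet> xi}"
    by (rule hull_minimal) (rule convex_halfspace_le)
  then have "0 \<le> d \<bullet> xi" using assms(2) by auto
  moreover have "(norm x)\<^sup>2 = (norm xi)\<^sup>2 + 2 * (d \<bullet> xi) + (norm d)\<^sup>2"
    by (simp add: d_def power2_norm_eq_inner inner_diff inner_commute algebra_simps)
  ultimately show pythagoras: "(norm xi)\<^sup>2 + (norm (x - xi))\<^sup>2 \<le> (norm x)\<^sup>2"
    by (simp add: d_def)
  then have "(norm xi)\<^sup>2 \<le> (norm x)\<^sup>2"
    using zero_le_power2[of "norm (x - xi)"] by linarith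
  then show "norm xi \<le> norm x" by (rule power2_le_imp_le) simp
  show "x = xi" if "norm x = norm xi"
  proof -
    have "(norm (x - xi))\<^sup>2 \<le> 0" using pythagoras unfolding that by linarith
    then show ?thesis by simp
  qed
qed

lemma exists_dpcir_shorter:
  fixes X :: "(real^2) set"
  assumes "finite X" "X \<noteq> {}" "0 \<notin> convex hull X"
  obtains xi x where "xi \<in> X" "x \<in> dpcir X xi" "norm x < norm xi"
proof -
  have "closed (convex hull X)"
    using assms(1) by (simp add: compact_imp_closed compact_convex_hull finite_imp_compact)
  then obtain a b where "a \<noteq> 0" "0 < b" and sep: "\<forall>y\<in>convex hull X. b < a \<bullet> y"
    using separating_hyperplane_closed_0[OF convex_convex_hull _ assms(3)] by blast
  obtain xi where xi: "xi \<in> X" "\<forall>y\<in>X. a \<bullet> xi \<le> a \<bullet> y"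
    using ex_is_arg_min_if_finite[OF assms(1,2), of "\<lambda>y. a \<bullet> y"]
    by (auto simp: is_arg_min_linorder)
  have "0 < a \<bullet> xi" using sep xi(1) \<open>0 < b\<close> hull_subset[of X convex] by fastforce
  define t where "t = (a \<bullet> xi) / (a \<bullet> a)"
  have "0 < t" using \<open>0 < a \<bullet> xi\<close> \<open>a \<noteq> 0\<close> by (simp add: t_def)
  define x where "x = xi - t *\<^sub>R a"
  have "x \<in> dpcir X xi"
    unfolding mem_dpcir_iff
  proof
    fix j assume "j \<in> neighbor_set X xi"
    then have "a \<bullet> xi \<le> a \<bullet> j" using xi(2) by (simp add: neighbor_set_def)
    then show "0 \<le> (xi - j) \<bullet> (x - xi)"
      using \<open>0 < t\<close> by (simp add: x_def inner_diff_left inner_commute algebra_simps)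
  qed
  moreover have "(norm x)\<^sup>2 = (norm xi)\<^sup>2 - 2 * t * (a \<bullet> xi) + t\<^sup>2 * (a \<bullet> a)"
    unfolding x_def power2_norm_eq_inner
    by (simp add: inner_diff inner_commute algebra_simps power2_eq_square)
  moreover have "t\<^sup>2 * (a \<bullet> a) = t * (a \<bullet> xi)"
    using \<open>a \<noteq> 0\<close> by (simp add: t_def power2_eq_square)
  ultimately have "norm x < norm xi"
    using \<open>0 < t\<close> \<open>0 < a \<bullet> xi\<close> by (simp add: power2_less_imp_less[of "norm x" "norm xi"])
  with \<open>x \<in> dpcir X xi\<close> show thesis using that xi(1) by blast
qed

theorem lemma3:
  fixes X :: "(real^2) set"
  assumes "constellation X"
  shows "((0::real^2) \<in> convex hull X \<longleftrightarrow>
           (\<forall>xi\<in>X. \<forall>x\<in>dpcir X xi. norm x \<ge> norm xi))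
       \<and> ((0::real^2) \<in> convex hull X \<longrightarrow>
           (\<forall>xi\<in>X. \<forall>x\<in>dpcir X xi. norm x = norm xi \<longrightarrow> x = xi))"
proof -
  have "finite X" "X \<noteq> {}" using assms by (auto simp: constellation_def)
  have "0 \<in> convex hull X" if "\<forall>xi\<in>X. \<forall>x\<in>dpcir X xi. norm xi \<le> norm x"
  proof (rule ccontr)
    assume "0 \<notin> convex hull X"
    then obtain xi x where "xi \<in> X" "x \<in> dpcir X xi" "norm x < norm xi"
      by (rule exists_dpcir_shorter[OF \<open>finite X\<close> \<open>X \<noteq> {}\<close>])
    with that show False by (meson not_le)
  qed
  then show ?thesis using norm_ge_on_dpcir(2,3)[OF \<open>finite X\<close>] by blast
qed

end
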